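(* Let $m\ge3$ and let $\mathscr{P}$ be a symmetric transition probability tensor of order $m$ and dimension $2$. Then $\mathscr{P}$ has a unique positive stationary probability vector (i.e., one with both entries strictly positive), and it equals $(\tfrac12,\tfrac12)^\top$.
   Context: $\mathscr{P}=(p_{i_1\cdots i_m})$ is a tensor of order $m$ and dimension $2$ with real entries indexed by $i_1,\dots,i_m\in\{1,2\}$. It is symmetric if its entries are invariant under every permutation of indices. It is a transition probability tensor if $0\le p_{i_1\cdots i_m}\le1$ and $\sum_{i_1=1}^2p_{i_1i_2\cdots i_m}=1$ for all $i_2,\dots,i_m$. A stationary probability vector of $\mathscr{P}$ is a vector $z=(z_1,z_2)^\top$ with $z_1,z_2\ge0$ and $z_1+z_2=1$ such that $$\sum_{i_2,\dots,i_m=1}^2p_{ii_2\cdots i_m}z_{i_2}\cdots z_{i_m}=z_i\quad\text{for } i=1,2.$$ *)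

theory Defs
  imports Complex_Main "HOL-Library.Multiset"
begin

text \<open>A tensor of order m and dimension 2 is a function on index lists
  (i_1,...,i_m) of length m with entries in {1,2}; values on other lists are irrelevant.\<close>

definition idx :: "nat \<Rightarrow> nat list set" where
  "idx k = {xs. length xs = k \<and> set xs \<subseteq> {1,2}}"

definition symmetric_tensor :: "nat \<Rightarrow> (nat list \<Rightarrow> real) \<Rightarrow> bool" where
  "symmetric_tensor m P \<longleftrightarrow>
     (\<forall>xs\<in>idx m. \<forall>ys\<in>idx m. mset xs = mset ys \<longrightarrow> P xs = P ys)"

definition transition_tensor :: "nat \<Rightarrow> (nat list \<Rightarrow> real) \<Rightarrow> bool" where
  "transition_tensor m P \<longleftrightarrow>
     (\<forall>xs\<in>idx m. 0 \<le> P xs \<and> P xs \<le> 1) \<and>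
     (\<forall>t\<in>idx (m - 1). (\<Sum>i\<in>{1,2::nat}. P (i # t)) = 1)"

definition stationary :: "nat \<Rightarrow> (nat list \<Rightarrow> real) \<Rightarrow> real \<Rightarrow> real \<Rightarrow> bool" where
  "stationary m P z1 z2 \<longleftrightarrow>
     (let z = (\<lambda>i::nat. if i = 1 then z1 else z2) in
      z1 \<ge> 0 \<and> z2 \<ge> 0 \<and> z1 + z2 = 1 \<and>
      (\<forall>i\<in>{1,2}. (\<Sum>t\<in>idx (m - 1). P (i # t) * (\<Prod>j<length t. z (t ! j))) = z i))"

end

theory Submission
  imports Defs
begin

text \<open>Symmetry together with the column condition P(1 t) + P(2 t) = 1 forces
  P(xs) = 1/2 + (c - 1/2) (-1)^k, where k is the number of indices equal to 1 and
  c = P(2,...,2). Summing against z_{i_2} ... z_{i_m} as in the binomial theorem, both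
  stationarity equations become, for z1 + z2 = 1, the single equation
  (2c - 1) d^(m-1) = d with d = z2 - z1. Since |2c - 1| \<le> 1, |d| < 1 for a positive
  vector and m - 1 \<ge> 2, only d = 0 solves it.\<close>

lemma idx_Suc: "idx (Suc n) = (\<lambda>(i, t). i # t) ` ({1, 2} \<times> idx n)"
  unfolding idx_def by (auto simp: length_Suc_conv image_iff)

lemma sum_idx_prod_list:
  fixes g :: "nat \<Rightarrow> 'a::comm_semiring_1"
  shows "(\<Sum>t\<in>idx n. prod_list (map g t)) = (g 1 + g 2) ^ n"
proof (induction n)
  case 0
  have "idx 0 = {[]}" by (auto simp: idx_def)
  then show ?case by simp
next
  case (Suc n)
  have inj: "inj_on (\<lambda>(i, t). i # t) ({1, 2} \<times> idx n)" by (auto simp: inj_on_def)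
  have "(\<Sum>t\<in>idx (Suc n). prod_list (map g t))
      = (\<Sum>(i, t)\<in>{1, 2} \<times> idx n. g i * prod_list (map g t))"
    unfolding idx_Suc by (subst sum.reindex[OF inj]) (simp add: case_prod_unfold)
  also have "\<dots> = (\<Sum>i\<in>{1, 2::nat}. g i * (\<Sum>t\<in>idx n. prod_list (map g t)))"
    by (simp add: sum.cartesian_product[symmetric] sum_distrib_left)
  also have "\<dots> = (g 1 + g 2) ^ Suc n"
    by (simp add: Suc distrib_right)
  finally show ?case .
qed

lemma neg_one_power_count_mult_prod_list:
  fixes z :: "nat \<Rightarrow> 'a::comm_ring_1"
  shows "(-1) ^ count (mset t) 1 * prod_list (map z t)
    = prod_list (map (\<lambda>i. if i = 1 then - z i else z i) t)"
  by (induction t) (simp_all add: mult.left_commute)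

lemma sum_idx_parity_weighted:
  fixes z :: "nat \<Rightarrow> 'a::comm_ring_1"
  shows "(\<Sum>t\<in>idx n. (a + b * (-1) ^ count (mset t) 1) * prod_list (map z t))
    = a * (z 1 + z 2) ^ n + b * (z 2 - z 1) ^ n"
proof -
  have "(\<Sum>t\<in>idx n. (a + b * (-1) ^ count (mset t) 1) * prod_list (map z t))
      = (\<Sum>t\<in>idx n. a * prod_list (map z t)
          + b * prod_list (map (\<lambda>i. if i = 1 then - z i else z i) t))"
    by (intro sum.cong refl)
      (simp only: distrib_right mult.assoc neg_one_power_count_mult_prod_list)
  then show ?thesis
    by (simp add: sum.distrib sum_distrib_left[symmetric] sum_idx_prod_list)
qed

lemma symmetric_transition_tensor_eq:
  assumes sym: "symmetric_tensor m P" and trans: "transition_tensor m P"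
    and "m \<ge> 1" and "xs \<in> idx m"
  shows "P xs = 1/2 + (P (replicate m 2) - 1/2) * (-1) ^ count (mset xs) 1"
  using \<open>xs \<in> idx m\<close>
proof (induction "count (mset xs) 1" arbitrary: xs)
  case 0
  then have "xs = replicate m 2"
    by (auto simp: idx_def count_eq_zero_iff intro!: replicate_eqI)
  with 0 show ?case by simp
next
  case (Suc k)
  then have "1 \<in> set xs" by (metis count_mset_0_iff nat.simps(3))
  define t where "t = remove1 1 xs"
  have mset_xs: "mset xs = mset (1 # t)"
    using \<open>1 \<in> set xs\<close> by (simp add: t_def)
  have t: "t \<in> idx (m - 1)"
    using Suc.prems \<open>1 \<in> set xs\<close> set_remove1_subset[of 1 xs]
    by (auto simp: t_def length_remove1 idx_def)
  with \<open>m \<ge> 1\<close> have idx_Cons: "1 # t \<in> idx m" "2 # t \<in> idx m"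
    by (auto simp: idx_def)
  have "P xs = P (1 # t)"
    using sym Suc.prems idx_Cons(1) mset_xs unfolding symmetric_tensor_def by blast
  also have "\<dots> = 1 - P (2 # t)"
    using trans t unfolding transition_tensor_def by (simp add: eq_diff_eq)
  also have "P (2 # t) = 1/2 + (P (replicate m 2) - 1/2) * (-1) ^ k"
    using Suc.hyps(1)[of "2 # t"] Suc.hyps(2) idx_Cons(2) mset_xs by simp
  finally show ?case
    unfolding Suc.hyps(2)[symmetric] by simp
qed

lemma stationary_symmetric_transition_iff:
  assumes "symmetric_tensor m P" and "transition_tensor m P" and "m \<ge> 1"
  shows "stationary m P z1 z2 \<longleftrightarrow> z1 \<ge> 0 \<and> z2 \<ge> 0 \<and> z1 + z2 = 1 \<and>
    (2 * P (replicate m 2) - 1) * (z2 - z1) ^ (m - 1) = z2 - z1"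
proof -
  define c where "c = P (replicate m 2)"
  define z where "z = (\<lambda>i::nat. if i = 1 then z1 else z2)"
  define s :: "nat \<Rightarrow> real" where "s i = (if i = 1 then 1/2 - c else c - 1/2)" for i
  have P_Cons: "P (i # t) = 1/2 + s i * (-1) ^ count (mset t) 1"
    if "i \<in> {1, 2}" "t \<in> idx (m - 1)" for i t
    using symmetric_transition_tensor_eq[OF assms, of "i # t"] that \<open>m \<ge> 1\<close>
    by (auto simp: idx_def c_def s_def algebra_simps)
  have row_sum: "(\<Sum>t\<in>idx (m - 1). P (i # t) * (\<Prod>j<length t. z (t ! j)))
      = 1/2 * (z1 + z2) ^ (m - 1) + s i * (z2 - z1) ^ (m - 1)" if "i \<in> {1, 2}" for i
  proof -
    have "(\<Sum>t\<in>idx (m - 1). P (i # t) * (\<Prod>j<length t. z (t ! j)))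
        = (\<Sum>t\<in>idx (m - 1). (1/2 + s i * (-1) ^ count (mset t) 1) * prod_list (map z t))"
      using that
      by (intro sum.cong refl) (simp add: P_Cons prod.list_conv_set_nth lessThan_atLeast0)
    also have "\<dots> = 1/2 * (z 1 + z 2) ^ (m - 1) + s i * (z 2 - z 1) ^ (m - 1)"
      by (rule sum_idx_parity_weighted)
    finally show ?thesis by (simp add: z_def)
  qed
  have "stationary m P z1 z2 \<longleftrightarrow> z1 \<ge> 0 \<and> z2 \<ge> 0 \<and> z1 + z2 = 1 \<and>
      1/2 * (z1 + z2) ^ (m - 1) + (1/2 - c) * (z2 - z1) ^ (m - 1) = z1 \<and>
      1/2 * (z1 + z2) ^ (m - 1) + (c - 1/2) * (z2 - z1) ^ (m - 1) = z2"
    unfolding stationary_def Let_def z_def[symmetric]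
    using row_sum[of 1] row_sum[of 2] by (simp add: z_def s_def)
  also have "\<dots> \<longleftrightarrow> z1 \<ge> 0 \<and> z2 \<ge> 0 \<and> z1 + z2 = 1 \<and>
      (2 * c - 1) * (z2 - z1) ^ (m - 1) = z2 - z1"
  proof -
    have "1/2 + (1/2 - c) * X = z1 \<longleftrightarrow> (2 * c - 1) * X = z2 - z1"
      and "1/2 + (c - 1/2) * X = z2 \<longleftrightarrow> (2 * c - 1) * X = z2 - z1"
      if "z1 + z2 = 1" for X
      using that by (auto simp: algebra_simps)
    from this[of "(z2 - z1) ^ (m - 1)"] show ?thesis by auto
  qed
  finally show ?thesis unfolding c_def .
qed

lemma power_fixed_point_eq_0:
  fixes a d :: real
  assumes "\<bar>a\<bar> \<le> 1" and "\<bar>d\<bar> < 1" and "n \<ge> 2" and "a * d ^ n = d"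
  shows "d = 0"
proof (rule ccontr)
  assume "d \<noteq> 0"
  have "\<bar>d\<bar> = \<bar>a\<bar> * \<bar>d\<bar> ^ n"
    using \<open>a * d ^ n = d\<close> by (metis abs_mult power_abs)
  also have "\<dots> \<le> \<bar>d\<bar> ^ n"
    using assms(1) by (intro mult_left_le_one_le) auto
  also have "\<dots> \<le> \<bar>d\<bar> ^ 2"
    using assms(2,3) by (intro power_decreasing) auto
  also have "\<dots> < 1 * \<bar>d\<bar>"
    unfolding power2_eq_square
    by (rule mult_strict_right_mono) (use assms(2) \<open>d \<noteq> 0\<close> in auto)
  finally show False by simp
qed

theorem corollary2p1:
  fixes m :: nat and P :: "nat list \<Rightarrow> real"
  assumes "m \<ge> 3"
    and "symmetric_tensor m P"
    and "transition_tensor m P"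
  shows "{(z1, z2). z1 > 0 \<and> z2 > 0 \<and> stationary m P z1 z2} = {(1/2, 1/2)}"
proof -
  define c where "c = P (replicate m 2)"
  have "replicate m 2 \<in> idx m" by (auto simp: idx_def)
  then have c_bound: "\<bar>2 * c - 1\<bar> \<le> 1"
    using assms(3) by (auto simp: transition_tensor_def c_def)
  have stationary_iff: "stationary m P z1 z2 \<longleftrightarrow> z1 \<ge> 0 \<and> z2 \<ge> 0 \<and> z1 + z2 = 1 \<and>
      (2 * c - 1) * (z2 - z1) ^ (m - 1) = z2 - z1" for z1 z2
    using stationary_symmetric_transition_iff[OF assms(2,3)] assms(1) by (simp add: c_def)
  have "z1 = 1/2 \<and> z2 = 1/2" if "z1 > 0" "z2 > 0" "stationary m P z1 z2" for z1 z2
  proof -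
    have "z1 + z2 = 1" and "(2 * c - 1) * (z2 - z1) ^ (m - 1) = z2 - z1"
      using that(3) stationary_iff by blast+
    moreover have "\<bar>z2 - z1\<bar> < 1"
      using that(1,2) \<open>z1 + z2 = 1\<close> by linarith
    ultimately have "z2 - z1 = 0"
      using power_fixed_point_eq_0[OF c_bound, of "z2 - z1" "m - 1"] assms(1) by simp
    with \<open>z1 + z2 = 1\<close> show ?thesis by simp
  qed
  moreover have "stationary m P (1/2) (1/2)"
    using assms(1) by (simp add: stationary_iff)
  ultimately show ?thesis by auto
qed

end
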